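(* Let $\{\mathcal G,(\Gamma_0,\Gamma_1),(\widetilde\Gamma_0,\widetilde\Gamma_1)\}$ be a triple for the adjoint pair $\{S,\widetilde S\}$ satisfying (G), (D), (M), with $\rho(A_0)\neq\emptyset$ (equivalently $\rho(\widetilde A_0)\neq\emptyset$), $\gamma$-fields $\gamma,\widetilde\gamma$ and Weyl functions $M,\widetilde M$. Let $B_1,B_2,\widetilde B_1,\widetilde B_2$ be linear operators in $\mathcal G$, and let $\lambda\in\rho(A_0)$, $\mu\in\rho(\widetilde A_0)$. (i) If $\lambda\notin\sigma_p(A_{B_1B_2})$ and $f\in\mathfrak H$ satisfies $\widetilde\gamma(\overline\lambda)^*f\in\operatorname{dom}B_2$ and $B_2\widetilde\gamma(\overline\lambda)^*f\in\operatorname{ran}(I-B_2M(\lambda)B_1)$, then $f\in\operatorname{ran}(A_{B_1B_2}-\lambda)$ and $(A_{B_1B_2}-\lambda)^{-1}f=(A_0-\lambda)^{-1}f+\gamma(\lambda)B_1(I-B_2M(\lambda)B_1)^{-1}B_2\widetilde\gamma(\overline\lambda)^*f$. If these two conditions hold for all $f\in\mathfrak H$, then $A_{B_1B_2}-\lambda$ is a bijection of $\operatorname{dom}A_{B_1B_2}$ onto $\mathfrak H$. (ii) If $\mu\notin\sigma_p(\widetilde A_{\widetilde B_1\widetilde B_2})$ and $g\in\mathfrak H$ satisfies $\gamma(\overline\mu)^*g\in\operatorname{dom}\widetilde B_2$ and $\widetilde B_2\gamma(\overline\mu)^*g\in\operatorname{ran}(I-\widetilde B_2\widetilde M(\mu)\widetilde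 B_1)$, then $g\in\operatorname{ran}(\widetilde A_{\widetilde B_1\widetilde B_2}-\mu)$ and $(\widetilde A_{\widetilde B_1\widetilde B_2}-\mu)^{-1}g=(\widetilde A_0-\mu)^{-1}g+\widetilde\gamma(\mu)\widetilde B_1(I-\widetilde B_2\widetilde M(\mu)\widetilde B_1)^{-1}\widetilde B_2\gamma(\overline\mu)^*g$. If these two conditions hold for all $g\in\mathfrak H$, then $\widetilde A_{\widetilde B_1\widetilde B_2}-\mu$ is a bijection of $\operatorname{dom}\widetilde A_{\widetilde B_1\widetilde B_2}$ onto $\mathfrak H$.
   Context: Let $\mathfrak H$ be a separable Hilbert space. An adjoint pair $\{S,\widetilde S\}$ consists of densely defined closed operators $S,\widetilde S$ in $\mathfrak H$ with $(Sf,g)=(f,\widetilde Sg)$ for all $f\in\operatorname{dom}S$, $g\in\operatorname{dom}\widetilde S$. Fix operators $T\subset S^*$ and $\widetilde T\subset\widetilde S^*$ which are cores, i.e. $\overline T=S^*$ and $\overline{\widetilde T}=\widetilde S^*$. A triple $\{\mathcal G,(\Gamma_0,\Gamma_1),(\widetilde\Gamma_0,\widetilde\Gamma_1)\}$ for $\{S,\widetilde S\}$ consists of a Hilbert space $\mathcal G$ and linear maps $\Gamma_0,\Gamma_1:\operatorname{dom}T\to\mathcal G$, $\widetilde\Gamma_0,\widetilde\Gamma_1:\operatorname{dom}\widetilde T\to\mathcal G$. Put $A_0:=T\upharpoonright\ker\Gamma_0$ and $\widetilde A_0:=\widetilde T\upharpoonright\ker\widetilde\Gamma_0$. Conditions: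 (G) $(Tf,g)_{\mathfrak H}-(f,\widetilde Tg)_{\mathfrak H}=(\Gamma_1f,\widetilde\Gamma_0g)_{\mathcal G}-(\Gamma_0f,\widetilde\Gamma_1g)_{\mathcal G}$ for all $f\in\operatorname{dom}T$, $g\in\operatorname{dom}\widetilde T$; (D) $\operatorname{ran}\Gamma_0$ and $\operatorname{ran}\widetilde\Gamma_0$ are dense in $\mathcal G$; (M) $A_0^*=\widetilde A_0$ and $\widetilde A_0^*=A_0$. For $\lambda\in\rho(A_0)$ one has $\operatorname{dom}T=\ker\Gamma_0\dotplus\ker(T-\lambda)$, so $\Gamma_0\upharpoonright\ker(T-\lambda)$ is injective; similarly for $\widetilde T$. The $\gamma$-fields are $\gamma(\lambda):=(\Gamma_0\upharpoonright\ker(T-\lambda))^{-1}$, $\widetilde\gamma(\mu):=(\widetilde\Gamma_0\upharpoonright\ker(\widetilde T-\mu))^{-1}$; the Weyl functions are $M(\lambda):=\Gamma_1\gamma(\lambda)$, $\lambda\in\rho(A_0)$, and $\widetilde M(\mu):=\widetilde\Gamma_1\widetilde\gamma(\mu)$, $\mu\in\rho(\widetilde A_0)$. Products of operators have their natural domains, e.g. $\operatorname{dom}(B_1B_2)=\{\varphi\in\operatorname{dom}B_2:B_2\varphi\in\operatorname{dom}B_1\}$, and $(I-B_2M(\lambda)B_1)^{-1}$ denotes the inverse of the (injective) operator $I-B_2M(\lambda)B_1$ defined on its range. Define $A_{B_1B_2}f:=Tf$ on $\operatorname{dom}A_{B_1B_2}:=\{f\in\operatorname{dom}T:\Gamma_1f\in\operatorname{dom}(B_1B_2),\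 B_1B_2\Gamma_1f=\Gamma_0f\}$ and $\widetilde A_{\widetilde B_1\widetilde B_2}g:=\widetilde Tg$ on $\operatorname{dom}\widetilde A_{\widetilde B_1\widetilde B_2}:=\{g\in\operatorname{dom}\widetilde T:\widetilde\Gamma_1g\in\operatorname{dom}(\widetilde B_1\widetilde B_2),\ \widetilde B_1\widetilde B_2\widetilde\Gamma_1g=\widetilde\Gamma_0g\}$. $\sigma_p$ denotes the set of eigenvalues. *)

theory Defs
  imports "HOL-Analysis.Analysis"
begin

class complex_inner = real_normed_vector +
  fixes scaleC :: "complex \<Rightarrow> 'a \<Rightarrow> 'a" (infixr "*\<^sub>C" 75)
    and cinner :: "'a \<Rightarrow> 'a \<Rightarrow> complex"
  assumes scaleC_add_right: "a *\<^sub>C (x + y) = a *\<^sub>C x + a *\<^sub>C y"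
    and scaleC_add_left: "(a + b) *\<^sub>C x = a *\<^sub>C x + b *\<^sub>C x"
    and scaleC_scaleC: "a *\<^sub>C (b *\<^sub>C x) = (a * b) *\<^sub>C x"
    and scaleC_one: "1 *\<^sub>C x = x"
    and scaleR_scaleC: "scaleR r x = complex_of_real r *\<^sub>C x"
    and cinner_commute: "cinner x y = cnj (cinner y x)"
    and cinner_add_left: "cinner (x + y) z = cinner x z + cinner y z"
    and cinner_scaleC_left: "cinner (a *\<^sub>C x) y = a * cinner x y"
    and cinner_self_real: "Im (cinner x x) = 0"
    and cinner_self_nonneg: "0 \<le> Re (cinner x x)"
    and cinner_self_eq_zero: "cinner x x = 0 \<longleftrightarrow> x = 0"
    and norm_eq_sqrt_cinner: "norm x = sqrt (Re (cinner x x))"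

class chilbert_space = complex_inner + complete_space

definition separable_space :: "'a::metric_space itself \<Rightarrow> bool" where
  "separable_space _ \<longleftrightarrow> (\<exists>D::'a set. countable D \<and> closure D = UNIV)"

text \<open>An operator from 'a to 'b is represented by its graph, a subset of 'a \<times> 'b.
Domain = domain, Range = range, converse = inverse, and relational composition
A O B is the operator product "B A" with its natural domain.\<close>

definition linrel :: "('a::complex_inner \<times> 'b::complex_inner) set \<Rightarrow> bool" where
  "linrel A \<longleftrightarrow> (0, 0) \<in> A \<and>
     (\<forall>x y u v. (x, y) \<in> A \<longrightarrow> (u, v) \<in> A \<longrightarrow> (x + u, y + v) \<in> A) \<and>
     (\<forall>c x y. (x, y) \<in> A \<longrightarrow> (c *\<^sub>C x, c *\<^sub>C y) \<in> A)"

definition linop :: "('a::complex_inner \<times> 'b::complex_inner) set \<Rightarrow> bool" where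
  "linop A \<longleftrightarrow> linrel A \<and> (\<forall>y. (0, y) \<in> A \<longrightarrow> y = 0)"

definition opapp :: "('a \<times> 'b) set \<Rightarrow> 'a \<Rightarrow> 'b" where
  "opapp A x = (THE y. (x, y) \<in> A)"

definition adj :: "('a::complex_inner \<times> 'b::complex_inner) set \<Rightarrow> ('b \<times> 'a) set" where
  "adj A = {(y, x). \<forall>u v. (u, v) \<in> A \<longrightarrow> cinner v y = cinner u x}"

definition densely_defined :: "('a::complex_inner \<times> 'b) set \<Rightarrow> bool" where
  "densely_defined A \<longleftrightarrow> closure (Domain A) = UNIV"

definition shift :: "('a::complex_inner \<times> 'a) set \<Rightarrow> complex \<Rightarrow> ('a \<times> 'a) set" where
  "shift A z = {(x, y - z *\<^sub>C x) | x y. (x, y) \<in> A}"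

definition id_minus :: "('a::complex_inner \<times> 'a) set \<Rightarrow> ('a \<times> 'a) set" where
  "id_minus C = {(x, x - y) | x y. (x, y) \<in> C}"

definition opsum :: "('a \<times> 'b::plus) set \<Rightarrow> ('a \<times> 'b) set \<Rightarrow> ('a \<times> 'b) set" where
  "opsum A B = {(x, y + z) | x y z. (x, y) \<in> A \<and> (x, z) \<in> B}"

definition point_spectrum :: "('a::complex_inner \<times> 'a) set \<Rightarrow> complex set" where
  "point_spectrum A = {z. \<exists>x. x \<noteq> 0 \<and> (x, z *\<^sub>C x) \<in> A}"

definition resolvent_set :: "('a::complex_inner \<times> 'a) set \<Rightarrow> complex set" where
  "resolvent_set A = {z. linop (converse (shift A z)) \<and> Range (shift A z) = UNIV \<and>
      (\<exists>C. \<forall>x y. (x, y) \<in> shift A z \<longrightarrow> norm x \<le> C * norm y)}"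

definition linear_on :: "'a set \<Rightarrow> ('a::complex_inner \<Rightarrow> 'b::complex_inner) \<Rightarrow> bool" where
  "linear_on D F \<longleftrightarrow> (\<forall>x\<in>D. \<forall>y\<in>D. F (x + y) = F x + F y) \<and>
                      (\<forall>c. \<forall>x\<in>D. F (c *\<^sub>C x) = c *\<^sub>C F x)"

definition adjoint_pair :: "('h::complex_inner \<times> 'h) set \<Rightarrow> ('h \<times> 'h) set \<Rightarrow> bool" where
  "adjoint_pair S St \<longleftrightarrow> linop S \<and> linop St \<and> densely_defined S \<and> densely_defined St \<and>
     closed S \<and> closed St \<and>
     (\<forall>f k g l. (f, k) \<in> S \<longrightarrow> (g, l) \<in> St \<longrightarrow> cinner k g = cinner f l)"

definition is_core_of_adj :: "('h::complex_inner \<times> 'h) set \<Rightarrow> ('h \<times> 'h) set \<Rightarrow> bool" where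
  "is_core_of_adj T S \<longleftrightarrow> linop T \<and> T \<subseteq> adj S \<and> closure T = adj S"

definition kerT :: "('h::complex_inner \<times> 'h) set \<Rightarrow> complex \<Rightarrow> 'h set" where
  "kerT T z = {f. (f, z *\<^sub>C f) \<in> T}"

definition A0 :: "('h::complex_inner \<times> 'h) set \<Rightarrow> ('h \<Rightarrow> 'g::complex_inner) \<Rightarrow> ('h \<times> 'h) set" where
  "A0 T \<Gamma>0 = {(f, k). (f, k) \<in> T \<and> \<Gamma>0 f = 0}"

definition gamma_field :: "('h::complex_inner \<times> 'h) set \<Rightarrow> ('h \<Rightarrow> 'g::complex_inner) \<Rightarrow> complex \<Rightarrow> ('g \<times> 'h) set" where
  "gamma_field T \<Gamma>0 z = {(\<Gamma>0 f, f) | f. f \<in> kerT T z}"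

definition weyl :: "('h::complex_inner \<times> 'h) set \<Rightarrow> ('h \<Rightarrow> 'g::complex_inner) \<Rightarrow> ('h \<Rightarrow> 'g) \<Rightarrow> complex \<Rightarrow> ('g \<times> 'g) set" where
  "weyl T \<Gamma>0 \<Gamma>1 z = gamma_field T \<Gamma>0 z O {(f, \<Gamma>1 f) | f. True}"

text \<open>A_{B_1 B_2}: T restricted to {f. \<Gamma>_1 f \<in> dom(B_1 B_2), B_1 B_2 \<Gamma>_1 f = \<Gamma>_0 f};
  the product B_1 B_2 (first B_2, then B_1) is the composition B_2 O B_1.\<close>
definition ext_op :: "('h::complex_inner \<times> 'h) set \<Rightarrow> ('h \<Rightarrow> 'g::complex_inner) \<Rightarrow> ('h \<Rightarrow> 'g)
     \<Rightarrow> ('g \<times> 'g) set \<Rightarrow> ('g \<times> 'g) set \<Rightarrow> ('h \<times> 'h) set" where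
  "ext_op T \<Gamma>0 \<Gamma>1 B1 B2 = {(f, k). (f, k) \<in> T \<and> (\<Gamma>1 f, \<Gamma>0 f) \<in> B2 O B1}"

definition triple_GDM :: "('h::complex_inner \<times> 'h) set \<Rightarrow> ('h \<times> 'h) set \<Rightarrow> ('h \<times> 'h) set \<Rightarrow> ('h \<times> 'h) set
     \<Rightarrow> ('h \<Rightarrow> 'g::complex_inner) \<Rightarrow> ('h \<Rightarrow> 'g) \<Rightarrow> ('h \<Rightarrow> 'g) \<Rightarrow> ('h \<Rightarrow> 'g) \<Rightarrow> bool" where
  "triple_GDM S St T Tt \<Gamma>0 \<Gamma>1 \<Gamma>t0 \<Gamma>t1 \<longleftrightarrow>
     adjoint_pair S St \<and> is_core_of_adj T S \<and> is_core_of_adj Tt St \<and>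
     linear_on (Domain T) \<Gamma>0 \<and> linear_on (Domain T) \<Gamma>1 \<and>
     linear_on (Domain Tt) \<Gamma>t0 \<and> linear_on (Domain Tt) \<Gamma>t1 \<and>
     \<comment> \<open>(G)\<close>
     (\<forall>f k g l. (f, k) \<in> T \<longrightarrow> (g, l) \<in> Tt \<longrightarrow>
        cinner k g - cinner f l = cinner (\<Gamma>1 f) (\<Gamma>t0 g) - cinner (\<Gamma>0 f) (\<Gamma>t1 g)) \<and>
     \<comment> \<open>(D)\<close>
     closure (\<Gamma>0 ` Domain T) = UNIV \<and> closure (\<Gamma>t0 ` Domain Tt) = UNIV \<and>
     \<comment> \<open>(M)\<close>
     adj (A0 T \<Gamma>0) = A0 Tt \<Gamma>t0 \<and> adj (A0 Tt \<Gamma>t0) = A0 T \<Gamma>0"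

end

theory Submission
  imports Defs
begin

(* Given f, put k = (A_0 - \<lambda>)^-1 f. Green's identity (G) applied to k and to the elements of
   ker(T~ - conj \<lambda>) shows \<gamma>~(conj \<lambda>)^* f = \<Gamma>_1 k. If h solves (I - B_2 M(\<lambda>) B_1) h = B_2 \<Gamma>_1 k
   and u = \<gamma>(\<lambda>) B_1 h, then g = k + u satisfies (T - \<lambda>) g = f, \<Gamma>_0 g = \<Gamma>_0 u = B_1 h and
   B_2 \<Gamma>_1 g = B_2 \<Gamma>_1 k + B_2 M(\<lambda>) B_1 h = h, so g \<in> dom A_{B_1 B_2}.
   Every operator in the formula is single-valued: \<gamma>~(conj \<lambda>)^* because \<Gamma>~_0 (ker(T~ - conj \<lambda>))
   = \<Gamma>~_0 (dom T~) is dense, the decomposition of dom T~ resting on the surjectivity of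
   A~_0 - conj \<lambda> = (A_0 - \<lambda>)^*, which comes from the Riesz representation theorem; and
   (I - B_2 M(\<lambda>) B_1)^-1 because a fixed point of B_2 M(\<lambda>) B_1 yields an eigenvector of A_{B_1 B_2}.
   Part (ii) is part (i) for the triple with the roles of T and T~ exchanged. *)

section \<open>Complex inner product spaces\<close>

lemma scaleC_zero_left [simp]: "0 *\<^sub>C x = 0"
  using scaleR_scaleC[of 0 x] by simp

lemma scaleC_zero_right [simp]: "a *\<^sub>C 0 = 0"
  using scaleC_add_right[of a 0 0] by simp

lemma scaleC_minus_left: "(- a) *\<^sub>C x = - (a *\<^sub>C x)"
proof -
  have "a *\<^sub>C x + (- a) *\<^sub>C x = 0" by (simp add: scaleC_add_left[symmetric])
  then show ?thesis by (rule minus_unique[symmetric])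
qed

lemma scaleC_minus_right: "a *\<^sub>C (- x) = - (a *\<^sub>C x)"
proof -
  have "a *\<^sub>C x + a *\<^sub>C (- x) = 0" by (simp add: scaleC_add_right[symmetric])
  then show ?thesis by (rule minus_unique[symmetric])
qed

lemma scaleC_diff_right: "a *\<^sub>C (x - y) = a *\<^sub>C x - a *\<^sub>C y"
  by (simp only: diff_conv_add_uminus scaleC_add_right scaleC_minus_right)

lemma uminus_scaleC: "- x = (- 1) *\<^sub>C x"
  by (simp add: scaleC_minus_left scaleC_one)

lemma cinner_zero_left [simp]: "cinner 0 y = 0"
  using cinner_add_left[of 0 0 y] by simp

lemma cinner_cnj: "cnj (cinner x y) = cinner y x"
  using cinner_commute[of y x] by simp

lemma cinner_zero_right [simp]: "cinner y 0 = 0"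
  using cinner_commute[of y 0] by simp

lemma cinner_add_right: "cinner x (y + z) = cinner x y + cinner x z"
  using cinner_commute[of x "y + z"] cinner_commute[of y x] cinner_commute[of z x]
  by (simp add: cinner_add_left)

lemma cinner_scaleC_right: "cinner x (a *\<^sub>C y) = cnj a * cinner x y"
  using cinner_commute[of x "a *\<^sub>C y"] cinner_commute[of y x]
  by (simp add: cinner_scaleC_left)

lemma cinner_minus_left: "cinner (- x) y = - cinner x y"
  by (simp add: uminus_scaleC[of x] cinner_scaleC_left)

lemma cinner_minus_right: "cinner y (- x) = - cinner y x"
  by (simp add: uminus_scaleC[of x] cinner_scaleC_right)

lemma cinner_diff_left: "cinner (x - y) z = cinner x z - cinner y z"
  by (simp only: diff_conv_add_uminus cinner_add_left cinner_minus_left)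

lemma cinner_diff_right: "cinner z (x - y) = cinner z x - cinner z y"
  by (simp only: diff_conv_add_uminus cinner_add_right cinner_minus_right)

lemma cinner_self_norm: "cinner x x = complex_of_real ((norm x)\<^sup>2)"
  using norm_eq_sqrt_cinner[of x] cinner_self_nonneg[of x] cinner_self_real[of x]
  by (simp add: complex_eq_iff)

lemma norm_diff_projection_square:
  assumes "n \<noteq> 0"
  shows "(norm (e - (cinner e n / cinner n n) *\<^sub>C n))\<^sup>2
       = (norm e)\<^sup>2 - (cmod (cinner e n))\<^sup>2 / (norm n)\<^sup>2"
proof -
  define c where "c = cinner e n"
  define r where "r = (norm n)\<^sup>2"
  define t where "t = c / complex_of_real r"
  have r: "r > 0" using assms by (simp add: r_def)
  have nn: "cinner n n = complex_of_real r" by (simp add: r_def cinner_self_norm)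
  have ne: "cinner n e = cnj c" by (simp add: c_def cinner_cnj)
  have cc: "c * cnj c = complex_of_real ((cmod c)\<^sup>2)" by (rule complex_norm_square[symmetric])
  have "complex_of_real ((norm (e - t *\<^sub>C n))\<^sup>2)
      = cinner e e - t * cinner n e - cnj t * (cinner e n - t * cinner n n)"
    by (simp only: cinner_self_norm[symmetric] cinner_diff_left cinner_diff_right
        cinner_scaleC_left cinner_scaleC_right)
  also have "\<dots> = cinner e e - (c * cnj c) / complex_of_real r"
    unfolding t_def nn ne c_def[symmetric] using r by (simp add: field_simps)
  also have "\<dots> = complex_of_real ((norm e)\<^sup>2 - (cmod c)\<^sup>2 / r)"
    unfolding cc cinner_self_norm[of e] by simp
  finally have "(norm (e - t *\<^sub>C n))\<^sup>2 = (norm e)\<^sup>2 - (cmod c)\<^sup>2 / r"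
    using of_real_eq_iff by blast
  moreover have "cinner e n / cinner n n = t" by (simp add: t_def c_def nn)
  ultimately show ?thesis by (simp only: c_def r_def)
qed

lemma cauchy_schwarz: "cmod (cinner x y) \<le> norm x * norm y"
proof (cases "y = 0")
  case False
  have "0 \<le> (norm (x - (cinner x y / cinner y y) *\<^sub>C y))\<^sup>2" by simp
  then have "(cmod (cinner x y))\<^sup>2 / (norm y)\<^sup>2 \<le> (norm x)\<^sup>2"
    unfolding norm_diff_projection_square[OF False] by simp
  then have "(cmod (cinner x y))\<^sup>2 \<le> (norm x * norm y)\<^sup>2"
    using False by (simp add: field_simps power_mult_distrib)
  then show ?thesis by (meson norm_ge_zero power2_le_imp_le mult_nonneg_nonneg)
qed simp

lemma parallelogram_law:
  fixes a b :: "'a::complex_inner"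
  shows "(norm (a + b))\<^sup>2 + (norm (a - b))\<^sup>2 = 2 * (norm a)\<^sup>2 + 2 * (norm b)\<^sup>2"
proof -
  have "cinner (a + b) (a + b) + cinner (a - b) (a - b) = 2 * cinner a a + 2 * cinner b b"
    by (simp add: cinner_add_left cinner_add_right cinner_diff_left cinner_diff_right)
  then have "complex_of_real ((norm (a + b))\<^sup>2 + (norm (a - b))\<^sup>2)
           = complex_of_real (2 * (norm a)\<^sup>2 + 2 * (norm b)\<^sup>2)"
    by (simp add: cinner_self_norm)
  then show ?thesis using of_real_eq_iff by blast
qed

lemma continuous_on_cinner_left: "continuous_on UNIV (\<lambda>y. cinner y x)"
proof -
  have "dist (cinner a x) (cinner b x) \<le> norm x * dist a b" for a b
    using cauchy_schwarz[of "a - b" x] by (simp add: dist_norm cinner_diff_left mult.commute)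
  then show ?thesis
    by (intro lipschitz_on_continuous_on[of "norm x"] lipschitz_onI) auto
qed

lemma orthogonal_to_dense_eq_zero:
  assumes "closure D = UNIV" and "\<And>a. a \<in> D \<Longrightarrow> cinner a x = 0"
  shows "x = 0"
proof -
  have "closed {a. cinner a x = 0}"
    by (rule closed_Collect_eq[OF continuous_on_cinner_left continuous_on_const])
  then have "closure D \<subseteq> {a. cinner a x = 0}"
    using assms(2) by (intro closure_minimal) blast
  moreover have "x \<in> closure D" using assms(1) by simp
  ultimately have "cinner x x = 0" by blast
  then show ?thesis by (simp add: cinner_self_eq_zero)
qed

section \<open>Nearest points and the Riesz representation theorem\<close>

definition csubspace :: "'a::complex_inner set \<Rightarrow> bool" where
  "csubspace N \<longleftrightarrow> 0 \<in> N \<and> (\<forall>a\<in>N. \<forall>b\<in>N. a + b \<in> N) \<and> (\<forall>c. \<forall>a\<in>N. c *\<^sub>C a \<in> N)"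

lemma Cauchy_minimizing_sequence:
  fixes x :: "'a::complex_inner"
  assumes d: "0 \<le> d" and mid: "\<And>i j. d \<le> norm (x - scaleR (1/2) (s i + s j))"
    and s: "\<And>m. (norm (x - s m))\<^sup>2 < d\<^sup>2 + 1 / real (Suc m)"
  shows "Cauchy s"
proof (rule CauchyI)
  have bound: "(norm (s i - s j))\<^sup>2 \<le> 2 / real (Suc i) + 2 / real (Suc j)" for i j
  proof -
    define a where "a = x - s i"
    define b where "b = x - s j"
    have "a + b = scaleR 2 (x - scaleR (1/2) (s i + s j))"
      by (simp add: a_def b_def scaleR_diff_right scaleR_add_right scaleR_2)
    then have "2 * d \<le> norm (a + b)" using mid[of i j] by simp
    then have "(2 * d)\<^sup>2 \<le> (norm (a + b))\<^sup>2" using d by (intro power_mono) auto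
    moreover have "norm (a - b) = norm (s i - s j)"
      by (simp add: a_def b_def norm_minus_commute)
    ultimately show ?thesis using parallelogram_law[of a b] s[of i] s[of j]
      by (simp add: a_def b_def power_mult_distrib)
  qed
  fix e :: real assume e: "0 < e"
  then have "0 < e\<^sup>2 / 4" by simp
  then obtain M where M: "inverse (real (Suc M)) < e\<^sup>2 / 4" using reals_Archimedean by blast
  show "\<exists>M. \<forall>m\<ge>M. \<forall>n\<ge>M. norm (s m - s n) < e"
  proof (intro exI allI impI)
    fix m n assume mn: "M \<le> m" "M \<le> n"
    have "2 / real (Suc m) \<le> 2 / real (Suc M)" "2 / real (Suc n) \<le> 2 / real (Suc M)"
      using mn by (simp_all add: frac_le)
    moreover have "4 / real (Suc M) < e\<^sup>2"
      using M by (simp add: inverse_eq_divide field_simps)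
    ultimately have "(norm (s m - s n))\<^sup>2 < e\<^sup>2"
      using bound[of m n] by linarith
    then show "norm (s m - s n) < e" using e by (simp add: power_less_imp_less_base)
  qed
qed

lemma nearest_point_exists:
  fixes x :: "'a::chilbert_space"
  assumes "closed N" "csubspace N"
  shows "\<exists>p\<in>N. \<forall>q\<in>N. norm (x - p) \<le> norm (x - q)"
proof -
  define d where "d = Inf ((\<lambda>q. norm (x - q)) ` N)"
  have N0: "0 \<in> N" using assms(2) by (simp add: csubspace_def)
  have bdd: "bdd_below ((\<lambda>q. norm (x - q)) ` N)" by (rule bdd_belowI[of _ 0]) auto
  have d_le: "d \<le> norm (x - q)" if "q \<in> N" for q
    unfolding d_def using bdd that by (auto intro: cInf_lower)
  have d: "0 \<le> d" unfolding d_def using N0 by (intro cInf_greatest) auto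
  have "\<exists>q\<in>N. (norm (x - q))\<^sup>2 < d\<^sup>2 + 1 / real (Suc m)" for m
  proof -
    have "d < sqrt (d\<^sup>2 + 1 / real (Suc m))" by (intro real_less_rsqrt) simp
    then obtain q where q: "q \<in> N" "norm (x - q) < sqrt (d\<^sup>2 + 1 / real (Suc m))"
      using cInf_less_iff[OF _ bdd] N0 unfolding d_def by auto
    then have "(norm (x - q))\<^sup>2 < (sqrt (d\<^sup>2 + 1 / real (Suc m)))\<^sup>2"
      by (intro power_strict_mono) auto
    then have "(norm (x - q))\<^sup>2 < d\<^sup>2 + 1 / real (Suc m)"
      by (simp add: add_nonneg_nonneg)
    with q show ?thesis by blast
  qed
  then obtain s where sN: "\<And>m. s m \<in> N" and s: "\<And>m. (norm (x - s m))\<^sup>2 < d\<^sup>2 + 1 / real (Suc m)"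
    by metis
  have "scaleR (1/2) (s i + s j) \<in> N" for i j
    using assms(2) sN by (simp add: csubspace_def scaleR_scaleC)
  then have "Cauchy s" using Cauchy_minimizing_sequence[OF d _ s] d_le by blast
  then obtain p where p: "s \<longlonglongrightarrow> p" using Cauchy_convergent convergent_def by blast
  have pN: "p \<in> N" using closed_sequentially[OF assms(1) sN p] .
  have "(\<lambda>m. (norm (x - s m))\<^sup>2) \<longlonglongrightarrow> (norm (x - p))\<^sup>2"
    by (intro tendsto_intros p)
  moreover have "(\<lambda>m. d\<^sup>2 + 1 / real (Suc m)) \<longlonglongrightarrow> d\<^sup>2 + 0"
    by (intro tendsto_intros LIMSEQ_inverse_real_of_nat[unfolded inverse_eq_divide])
  ultimately have "(norm (x - p))\<^sup>2 \<le> d\<^sup>2 + 0"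
    by (rule LIMSEQ_le) (use s less_imp_le in blast)
  then have "norm (x - p) \<le> d" using power2_le_imp_le d by simp
  then show ?thesis using pN d_le by (meson order_trans)
qed

lemma nearest_point_orthogonal:
  assumes N: "csubspace N" and p: "p \<in> N" and min: "\<And>q. q \<in> N \<Longrightarrow> norm (x - p) \<le> norm (x - q)"
    and n: "n \<in> N"
  shows "cinner (x - p) n = 0"
proof (cases "n = 0")
  case False
  define e where "e = x - p"
  define t where "t = cinner e n / cinner n n"
  have "p + t *\<^sub>C n \<in> N" using N p n by (simp add: csubspace_def)
  moreover have "x - (p + t *\<^sub>C n) = e - t *\<^sub>C n" by (simp add: e_def)
  ultimately have "norm e \<le> norm (e - t *\<^sub>C n)"
    using min unfolding e_def by metis
  then have "(norm e)\<^sup>2 \<le> (norm (e - t *\<^sub>C n))\<^sup>2" by (simp add: power_mono)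
  then have "(cmod (cinner e n))\<^sup>2 / (norm n)\<^sup>2 \<le> 0"
    unfolding t_def norm_diff_projection_square[OF False] by simp
  then have "(cmod (cinner e n))\<^sup>2 \<le> 0" using False by (simp add: divide_le_0_iff)
  then show ?thesis by (simp add: e_def)
qed simp

lemma riesz_representation:
  fixes \<phi> :: "'a::chilbert_space \<Rightarrow> complex"
  assumes add: "\<And>a b. \<phi> (a + b) = \<phi> a + \<phi> b"
    and scale: "\<And>c a. \<phi> (c *\<^sub>C a) = c * \<phi> a"
    and bounded: "\<And>a. cmod (\<phi> a) \<le> K * norm a"
  shows "\<exists>k. \<forall>y. \<phi> y = cinner y k"
proof (cases "\<forall>y. \<phi> y = 0")
  case False
  then obtain y0 where y0: "\<phi> y0 \<noteq> 0" by blast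
  have diff: "\<phi> (a - b) = \<phi> a - \<phi> b" for a b
    using add[of a "(-1) *\<^sub>C b"] scale[of "-1" b] by (simp add: uminus_scaleC[symmetric])
  have "0 \<le> K"
  proof (rule ccontr)
    assume "\<not> 0 \<le> K"
    then have "K * norm y0 \<le> 0" by (simp add: mult_nonpos_nonneg)
    then have "cmod (\<phi> y0) \<le> 0" using bounded[of y0] by linarith
    then show False using y0 by simp
  qed
  then have "continuous_on UNIV \<phi>"
    by (intro lipschitz_on_continuous_on[of K] lipschitz_onI)
       (auto simp: dist_norm diff[symmetric] bounded)
  then have closed: "closed {y. \<phi> y = 0}"
    by (rule closed_Collect_eq[OF _ continuous_on_const])
  have sub: "csubspace {y. \<phi> y = 0}"
    using add[of 0 0] by (simp add: csubspace_def add scale)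
  obtain p where p: "p \<in> {y. \<phi> y = 0}"
    and min: "\<And>q. q \<in> {y. \<phi> y = 0} \<Longrightarrow> norm (y0 - p) \<le> norm (y0 - q)"
    using nearest_point_exists[OF closed sub, of y0] by blast
  have orth: "cinner (y0 - p) n = 0" if "\<phi> n = 0" for n
    using nearest_point_orthogonal[OF sub p min] that by simp
  define e where "e = y0 - p"
  have phie: "\<phi> e \<noteq> 0" using p y0 by (simp add: e_def diff)
  have "\<phi> 0 = 0" using add[of 0 0] by simp
  then have ee: "cinner e e \<noteq> 0" using phie by (auto simp: cinner_self_eq_zero)
  have eer: "cnj (cinner e e) = cinner e e" by (simp add: cinner_cnj)
  show ?thesis
  proof (intro exI allI)
    fix y
    define c where "c = \<phi> y / \<phi> e"
    have "\<phi> (y - c *\<^sub>C e) = 0" using phie by (simp add: diff scale c_def)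
    then have "cinner e (y - c *\<^sub>C e) = 0" using orth by (simp add: e_def)
    then have "cinner e y = cnj c * cinner e e" by (simp add: cinner_diff_right cinner_scaleC_right)
    then have "cinner y e = c * cinner e e"
      using cinner_commute[of y e] eer by (metis complex_cnj_cnj complex_cnj_mult)
    then show "\<phi> y = cinner y (cnj (\<phi> e / cinner e e) *\<^sub>C e)"
      using ee phie by (simp add: cinner_scaleC_right c_def field_simps)
  qed
qed (intro exI[of _ 0], simp)

section \<open>Linear relations\<close>

lemma linrel_add: "linrel A \<Longrightarrow> (x, y) \<in> A \<Longrightarrow> (u, v) \<in> A \<Longrightarrow> (x + u, y + v) \<in> A"
  unfolding linrel_def by blast

lemma linrel_scaleC: "linrel A \<Longrightarrow> (x, y) \<in> A \<Longrightarrow> (c *\<^sub>C x, c *\<^sub>C y) \<in> A"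
  unfolding linrel_def by blast

lemma linrel_diff:
  assumes "linrel A" "(x, y) \<in> A" "(u, v) \<in> A"
  shows "(x - u, y - v) \<in> A"
  using linrel_add[OF assms(1,2) linrel_scaleC[OF assms(1,3), of "- 1"]]
  by (simp only: uminus_scaleC[symmetric] diff_conv_add_uminus)

lemma linop_linrel: "linop A \<Longrightarrow> linrel A"
  unfolding linop_def by blast

lemma linop_single_valued:
  assumes "linop A"
  shows "single_valued A"
proof (rule single_valuedI)
  fix x y y' assume "(x, y) \<in> A" "(x, y') \<in> A"
  then have "(0, y - y') \<in> A" using linrel_diff[OF linop_linrel[OF assms]] by fastforce
  then have "y - y' = 0" using assms unfolding linop_def by blast
  then show "y = y'" by simp
qed

lemma opapp_single_valued: "single_valued A \<Longrightarrow> (x, y) \<in> A \<Longrightarrow> opapp A x = y"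
  unfolding opapp_def by (blast dest: single_valuedD)

lemma linear_on_add: "linear_on D F \<Longrightarrow> x \<in> D \<Longrightarrow> y \<in> D \<Longrightarrow> F (x + y) = F x + F y"
  unfolding linear_on_def by blast

lemma linear_on_scaleC: "linear_on D F \<Longrightarrow> x \<in> D \<Longrightarrow> F (c *\<^sub>C x) = c *\<^sub>C F x"
  unfolding linear_on_def by blast

lemma linear_on_Domain_diff:
  assumes "linrel A" "linear_on (Domain A) F" "x \<in> Domain A" "y \<in> Domain A"
  shows "F (x - y) = F x - F y"
proof -
  have "(- 1) *\<^sub>C y \<in> Domain A" using assms(1,4) linrel_scaleC by blast
  then have "F (x + (- 1) *\<^sub>C y) = F x + (- 1) *\<^sub>C F y"
    using linear_on_add[OF assms(2,3)] linear_on_scaleC[OF assms(2,4)] by simp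
  then show ?thesis by (simp only: uminus_scaleC[symmetric] diff_conv_add_uminus)
qed

lemma linear_on_zero: "linear_on D F \<Longrightarrow> 0 \<in> D \<Longrightarrow> F 0 = 0"
  using linear_on_add[of D F 0 0] by simp

lemma linrel_Domain_zero: "linrel A \<Longrightarrow> 0 \<in> Domain A"
  unfolding linrel_def by blast

lemma linrel_relcomp:
  assumes "linrel A" "linrel B"
  shows "linrel (A O B)"
  using assms unfolding linrel_def by (blast intro: relcompI)

lemma shift_iff: "(x, y) \<in> shift A z \<longleftrightarrow> (x, y + z *\<^sub>C x) \<in> A"
proof
  assume "(x, y) \<in> shift A z"
  then obtain y' where "(x, y') \<in> A" "y = y' - z *\<^sub>C x" unfolding shift_def by blast
  then show "(x, y + z *\<^sub>C x) \<in> A" by simp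
next
  assume "(x, y + z *\<^sub>C x) \<in> A"
  then have "(x, (y + z *\<^sub>C x) - z *\<^sub>C x) \<in> shift A z" unfolding shift_def by blast
  then show "(x, y) \<in> shift A z" by simp
qed

lemma A0_iff: "(f, k) \<in> A0 T \<Gamma>0 \<longleftrightarrow> (f, k) \<in> T \<and> \<Gamma>0 f = 0"
  unfolding A0_def by blast

lemma kerT_iff: "u \<in> kerT T z \<longleftrightarrow> (u, z *\<^sub>C u) \<in> T"
  unfolding kerT_def by blast

lemma gamma_field_iff: "(p, u) \<in> gamma_field T \<Gamma>0 z \<longleftrightarrow> u \<in> kerT T z \<and> p = \<Gamma>0 u"
  unfolding gamma_field_def by blast

lemma weyl_iff: "(p, q) \<in> weyl T \<Gamma>0 \<Gamma>1 z \<longleftrightarrow> (\<exists>u \<in> kerT T z. p = \<Gamma>0 u \<and> q = \<Gamma>1 u)"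
  unfolding weyl_def gamma_field_def by blast

lemma ext_op_iff:
  "(f, k) \<in> ext_op T \<Gamma>0 \<Gamma>1 B1 B2 \<longleftrightarrow> (f, k) \<in> T \<and> (\<exists>m. (\<Gamma>1 f, m) \<in> B2 \<and> (m, \<Gamma>0 f) \<in> B1)"
  unfolding ext_op_def by blast

lemma id_minus_iff: "(x, w) \<in> id_minus C \<longleftrightarrow> (\<exists>y. (x, y) \<in> C \<and> w = x - y)"
  unfolding id_minus_def by blast

lemma opsum_iff: "(x, w) \<in> opsum A B \<longleftrightarrow> (\<exists>y z. (x, y) \<in> A \<and> (x, z) \<in> B \<and> w = y + z)"
  unfolding opsum_def by blast

lemma adj_iff: "(y, x) \<in> adj A \<longleftrightarrow> (\<forall>u v. (u, v) \<in> A \<longrightarrow> cinner v y = cinner u x)"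
  unfolding adj_def by blast

lemma point_spectrum_iff: "z \<in> point_spectrum A \<longleftrightarrow> (\<exists>x. x \<noteq> 0 \<and> (x, z *\<^sub>C x) \<in> A)"
  unfolding point_spectrum_def by blast

lemma Domain_shift: "Domain (shift A z) = Domain A"
proof
  show "Domain A \<subseteq> Domain (shift A z)"
  proof
    fix x assume "x \<in> Domain A"
    then obtain y where "(x, (y - z *\<^sub>C x) + z *\<^sub>C x) \<in> A" by auto
    then show "x \<in> Domain (shift A z)" unfolding shift_iff[symmetric] by blast
  qed
qed (auto simp: shift_iff)

lemma single_valued_shift: "single_valued A \<Longrightarrow> single_valued (shift A z)"
  unfolding single_valued_def shift_iff by (metis add_right_cancel)

lemma single_valued_converse_shift:
  assumes "linrel A" "z \<notin> point_spectrum A"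
  shows "single_valued (converse (shift A z))"
proof (rule single_valuedI)
  fix f x1 x2 assume "(f, x1) \<in> converse (shift A z)" "(f, x2) \<in> converse (shift A z)"
  then have "(x1, f + z *\<^sub>C x1) \<in> A" "(x2, f + z *\<^sub>C x2) \<in> A" by (simp_all add: shift_iff)
  from linrel_diff[OF assms(1) this] have "(x1 - x2, z *\<^sub>C (x1 - x2)) \<in> A"
    by (simp add: scaleC_diff_right)
  then have "x1 - x2 = 0" using assms(2) unfolding point_spectrum_iff by blast
  then show "x1 = x2" by simp
qed

lemma single_valued_opsum: "single_valued A \<Longrightarrow> single_valued B \<Longrightarrow> single_valued (opsum A B)"
  unfolding single_valued_def opsum_iff by blast

lemma bij_betw_opapp:
  assumes "single_valued A" "single_valued (converse A)" "Range A = UNIV"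
  shows "bij_betw (opapp A) (Domain A) UNIV"
  unfolding bij_betw_def
proof
  have app: "opapp A x = y" if "(x, y) \<in> A" for x y
    using opapp_single_valued[OF assms(1) that] .
  show "inj_on (opapp A) (Domain A)"
  proof (rule inj_onI)
    fix x1 x2 assume "x1 \<in> Domain A" "x2 \<in> Domain A" and eq: "opapp A x1 = opapp A x2"
    then obtain y1 y2 where "(x1, y1) \<in> A" "(x2, y2) \<in> A" by blast
    with eq app have "(y1, x1) \<in> converse A" "(y1, x2) \<in> converse A" by auto
    then show "x1 = x2" using single_valuedD[OF assms(2)] by blast
  qed
  show "opapp A ` Domain A = UNIV"
  proof (intro set_eqI iffI)
    fix y :: 'b
    obtain x where "(x, y) \<in> A" using assms(3) by blast
    then show "y \<in> opapp A ` Domain A" using app by (metis Domain.DomainI image_eqI)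
  qed simp
qed

lemma single_valued_converse_id_minus:
  assumes C: "linrel C" and fixed: "\<And>h. (h, h) \<in> C \<Longrightarrow> h = 0"
  shows "single_valued (converse (id_minus C))"
proof (rule single_valuedI)
  fix b h1 h2 assume "(b, h1) \<in> converse (id_minus C)" "(b, h2) \<in> converse (id_minus C)"
  then obtain c1 c2 where "(h1, c1) \<in> C" "(h2, c2) \<in> C" "b = h1 - c1" "b = h2 - c2"
    by (auto simp: id_minus_iff)
  moreover from this have "(h1 - h2, c1 - c2) \<in> C" using linrel_diff[OF C] by blast
  moreover have "c1 - c2 = h1 - h2" using \<open>b = h1 - c1\<close> \<open>b = h2 - c2\<close> by (simp add: algebra_simps)
  ultimately have "(h1 - h2, h1 - h2) \<in> C" by simp
  then show "h1 = h2" using fixed by fastforce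
qed

section \<open>Resolvents and adjoints\<close>

lemma resolvent_set_not_point_spectrum:
  assumes "z \<in> resolvent_set A"
  shows "z \<notin> point_spectrum A"
proof
  assume "z \<in> point_spectrum A"
  then obtain x where x: "x \<noteq> 0" "(x, z *\<^sub>C x) \<in> A" unfolding point_spectrum_iff by blast
  then have "(0, x) \<in> converse (shift A z)" by (simp add: shift_iff)
  moreover have "linop (converse (shift A z))" using assms by (simp add: resolvent_set_def)
  ultimately show False using x(1) unfolding linop_def by blast
qed

lemma Range_shift_adj_resolvent:
  fixes A :: "('a::chilbert_space \<times> 'a) set"
  assumes z: "z \<in> resolvent_set A"
  shows "Range (shift (adj A) (cnj z)) = UNIV"
proof -
  define R where "R = converse (shift A z)"
  have R: "linop R" and "Domain R = UNIV" and "\<exists>K. \<forall>x y. (y, x) \<in> R \<longrightarrow> norm x \<le> K * norm y"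
    using z unfolding resolvent_set_def R_def by auto
  then obtain K where K: "\<And>x y. (y, x) \<in> R \<Longrightarrow> norm x \<le> K * norm y"
    and R_app: "\<And>y. (y, opapp R y) \<in> R"
    using opapp_single_valued[OF linop_single_valued[OF R]] by blast
  have R_eq: "(y, x) \<in> R \<Longrightarrow> opapp R y = x" for x y
    using opapp_single_valued[OF linop_single_valued[OF R]] .
  \<comment> \<open>k, the Riesz representative of y \<mapsto> \<langle>(A - z)^-1 y, w\<rangle>, solves (A^* - conj z) k = w.\<close>
  have "(k, w) \<in> shift (adj A) (cnj z)" if k: "\<And>y. cinner (opapp R y) w = cinner y k" for w k
    unfolding shift_iff adj_iff
  proof (intro allI impI)
    fix u v assume "(u, v) \<in> A"
    then have "(v - z *\<^sub>C u, u) \<in> R" by (simp add: R_def shift_iff)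
    then have "cinner u w = cinner (v - z *\<^sub>C u) k" using k R_eq by metis
    then show "cinner v k = cinner u (w + cnj z *\<^sub>C k)"
      by (simp add: cinner_diff_left cinner_add_right cinner_scaleC_left cinner_scaleC_right)
  qed
  moreover have "\<exists>k. \<forall>y. cinner (opapp R y) w = cinner y k" for w
  proof (rule riesz_representation)
    show "cinner (opapp R (a + b)) w = cinner (opapp R a) w + cinner (opapp R b) w" for a b
      using R_eq[OF linrel_add[OF linop_linrel[OF R] R_app R_app]] by (simp add: cinner_add_left)
    show "cinner (opapp R (c *\<^sub>C a)) w = c * cinner (opapp R a) w" for c a
      using R_eq[OF linrel_scaleC[OF linop_linrel[OF R] R_app]] by (simp add: cinner_scaleC_left)
    show "cmod (cinner (opapp R a) w) \<le> (K * norm w) * norm a" for a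
      using cauchy_schwarz[of "opapp R a" w] mult_right_mono[OF K[OF R_app[of a]], of "norm w"]
      by (simp add: algebra_simps)
  qed
  ultimately show ?thesis by blast
qed

lemma single_valued_adj:
  assumes "densely_defined B"
  shows "single_valued (adj B)"
proof (rule single_valuedI)
  fix y x1 x2 assume "(y, x1) \<in> adj B" "(y, x2) \<in> adj B"
  then have "cinner u (x1 - x2) = 0" if "u \<in> Domain B" for u
    using that by (auto simp: adj_iff cinner_diff_right)
  then have "x1 - x2 = 0"
    using assms unfolding densely_defined_def by (rule orthogonal_to_dense_eq_zero[rotated])
  then show "x1 = x2" by simp
qed

section \<open>\<gamma>-fields, Weyl functions and the extended operators\<close>

lemma linrel_weyl:
  assumes T: "linrel T" and G0: "linear_on (Domain T) \<Gamma>0" and G1: "linear_on (Domain T) \<Gamma>1"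
  shows "linrel (weyl T \<Gamma>0 \<Gamma>1 z)"
proof -
  have "(0, z *\<^sub>C 0) \<in> T" using T by (simp add: linrel_def)
  then have zero: "(0, 0) \<in> weyl T \<Gamma>0 \<Gamma>1 z"
    using linear_on_zero[OF G0] linear_on_zero[OF G1] linrel_Domain_zero[OF T]
    by (auto simp: weyl_iff kerT_iff)
  have add: "(\<Gamma>0 a + \<Gamma>0 b, \<Gamma>1 a + \<Gamma>1 b) \<in> weyl T \<Gamma>0 \<Gamma>1 z"
    if "a \<in> kerT T z" "b \<in> kerT T z" for a b
  proof -
    have ab: "(a, z *\<^sub>C a) \<in> T" "(b, z *\<^sub>C b) \<in> T" using that by (simp_all add: kerT_iff)
    then have "a + b \<in> kerT T z"
      using linrel_add[OF T ab] by (simp add: kerT_iff scaleC_add_right)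
    moreover have "\<Gamma>0 (a + b) = \<Gamma>0 a + \<Gamma>0 b" "\<Gamma>1 (a + b) = \<Gamma>1 a + \<Gamma>1 b"
      using ab linear_on_add[OF G0] linear_on_add[OF G1] by blast+
    ultimately show ?thesis unfolding weyl_iff by metis
  qed
  have scale: "(c *\<^sub>C \<Gamma>0 a, c *\<^sub>C \<Gamma>1 a) \<in> weyl T \<Gamma>0 \<Gamma>1 z" if "a \<in> kerT T z" for a c
  proof -
    have a: "(a, z *\<^sub>C a) \<in> T" using that by (simp add: kerT_iff)
    then have "c *\<^sub>C a \<in> kerT T z"
      using linrel_scaleC[OF T a, of c] by (simp add: kerT_iff scaleC_scaleC mult.commute)
    moreover have "\<Gamma>0 (c *\<^sub>C a) = c *\<^sub>C \<Gamma>0 a" "\<Gamma>1 (c *\<^sub>C a) = c *\<^sub>C \<Gamma>1 a"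
      using a linear_on_scaleC[OF G0] linear_on_scaleC[OF G1] by blast+
    ultimately show ?thesis unfolding weyl_iff by metis
  qed
  show ?thesis
    unfolding linrel_def weyl_iff using zero add scale by (auto simp: weyl_iff)
qed

lemma weyl_fixed_point_eq_zero:
  assumes T: "linrel T" and G1: "linear_on (Domain T) \<Gamma>1" and B2: "linop B2"
    and nps: "z \<notin> point_spectrum (ext_op T \<Gamma>0 \<Gamma>1 B1 B2)"
    and h: "(h, h) \<in> B1 O weyl T \<Gamma>0 \<Gamma>1 z O B2"
  shows "h = 0"
proof -
  obtain u where u: "(h, \<Gamma>0 u) \<in> B1" "(u, z *\<^sub>C u) \<in> T" "(\<Gamma>1 u, h) \<in> B2"
    using h by (auto simp: weyl_iff kerT_iff)
  then have "(u, z *\<^sub>C u) \<in> ext_op T \<Gamma>0 \<Gamma>1 B1 B2" by (auto simp: ext_op_iff)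
  then have "u = 0" using nps by (auto simp: point_spectrum_iff)
  then have "(0, h) \<in> B2" using u(3) linear_on_zero[OF G1 linrel_Domain_zero[OF T]] by simp
  then show ?thesis using B2 by (simp add: linop_def)
qed

lemma linrel_ext_op:
  assumes T: "linrel T" and G0: "linear_on (Domain T) \<Gamma>0" and G1: "linear_on (Domain T) \<Gamma>1"
    and B1: "linrel B1" and B2: "linrel B2"
  shows "linrel (ext_op T \<Gamma>0 \<Gamma>1 B1 B2)"
proof -
  have zero: "(0, 0) \<in> ext_op T \<Gamma>0 \<Gamma>1 B1 B2"
    using T B1 B2 linear_on_zero[OF G0] linear_on_zero[OF G1] linrel_Domain_zero[OF T]
    by (auto simp: ext_op_iff linrel_def)
  have add: "(x + u, y + v) \<in> ext_op T \<Gamma>0 \<Gamma>1 B1 B2"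
    if xy: "(x, y) \<in> ext_op T \<Gamma>0 \<Gamma>1 B1 B2" and uv: "(u, v) \<in> ext_op T \<Gamma>0 \<Gamma>1 B1 B2" for x y u v
  proof -
    obtain m n where mn: "(x, y) \<in> T" "(\<Gamma>1 x, m) \<in> B2" "(m, \<Gamma>0 x) \<in> B1"
      "(u, v) \<in> T" "(\<Gamma>1 u, n) \<in> B2" "(n, \<Gamma>0 u) \<in> B1"
      using xy uv unfolding ext_op_iff by blast
    have "x \<in> Domain T" "u \<in> Domain T" using mn by blast+
    then show ?thesis
      using linrel_add[OF T mn(1,4)] linrel_add[OF B2 mn(2,5)] linrel_add[OF B1 mn(3,6)]
        linear_on_add[OF G0] linear_on_add[OF G1]
      by (auto simp: ext_op_iff)
  qed
  have scale: "(c *\<^sub>C x, c *\<^sub>C y) \<in> ext_op T \<Gamma>0 \<Gamma>1 B1 B2"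
    if xy: "(x, y) \<in> ext_op T \<Gamma>0 \<Gamma>1 B1 B2" for c x y
  proof -
    obtain m where m: "(x, y) \<in> T" "(\<Gamma>1 x, m) \<in> B2" "(m, \<Gamma>0 x) \<in> B1"
      using xy unfolding ext_op_iff by blast
    have "x \<in> Domain T" using m by blast
    then show ?thesis
      using linrel_scaleC[OF T m(1)] linrel_scaleC[OF B2 m(2)] linrel_scaleC[OF B1 m(3)]
        linear_on_scaleC[OF G0] linear_on_scaleC[OF G1]
      by (auto simp: ext_op_iff)
  qed
  show ?thesis using zero add scale unfolding linrel_def by blast
qed

lemma image_Domain_subset_image_kerT:
  assumes T: "linrel T" and G0: "linear_on (Domain T) \<Gamma>0"
    and surj: "Range (shift (A0 T \<Gamma>0) z) = UNIV"
  shows "\<Gamma>0 ` Domain T \<subseteq> \<Gamma>0 ` kerT T z"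
proof
  fix p assume "p \<in> \<Gamma>0 ` Domain T"
  then obtain g l where g: "p = \<Gamma>0 g" "(g, l) \<in> T" by blast
  obtain k where "(k, l - z *\<^sub>C g) \<in> shift (A0 T \<Gamma>0) z" using surj by blast
  then have k: "(k, l - z *\<^sub>C g + z *\<^sub>C k) \<in> T" "\<Gamma>0 k = 0" by (simp_all add: shift_iff A0_iff)
  have "(g - k, l - (l - z *\<^sub>C g + z *\<^sub>C k)) \<in> T" by (rule linrel_diff[OF T g(2) k(1)])
  then have "g - k \<in> kerT T z" by (simp add: kerT_iff scaleC_diff_right)
  moreover have "\<Gamma>0 (g - k) = p"
    using linear_on_Domain_diff[OF T G0] g k by (metis Domain.DomainI diff_zero)
  ultimately show "p \<in> \<Gamma>0 ` kerT T z" by blast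
qed

lemma densely_defined_gamma_field:
  assumes "linrel T" "linear_on (Domain T) \<Gamma>0" "Range (shift (A0 T \<Gamma>0) z) = UNIV"
    and dense: "closure (\<Gamma>0 ` Domain T) = UNIV"
  shows "densely_defined (gamma_field T \<Gamma>0 z)"
proof -
  have "Domain (gamma_field T \<Gamma>0 z) = \<Gamma>0 ` kerT T z" by (auto simp: gamma_field_iff)
  then show ?thesis
    using closure_mono[OF image_Domain_subset_image_kerT[OF assms(1-3)]] dense
    by (simp add: densely_defined_def top.extremum_unique)
qed

lemma single_valued_gamma_field:
  assumes T: "linrel T" and G0: "linear_on (Domain T) \<Gamma>0"
    and nps: "z \<notin> point_spectrum (A0 T \<Gamma>0)"
  shows "single_valued (gamma_field T \<Gamma>0 z)"
proof (rule single_valuedI)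
  fix p u1 u2 assume "(p, u1) \<in> gamma_field T \<Gamma>0 z" "(p, u2) \<in> gamma_field T \<Gamma>0 z"
  then have u: "(u1, z *\<^sub>C u1) \<in> T" "(u2, z *\<^sub>C u2) \<in> T" "\<Gamma>0 u1 = \<Gamma>0 u2"
    by (auto simp: gamma_field_iff kerT_iff)
  have "(u1 - u2, z *\<^sub>C (u1 - u2)) \<in> T"
    using linrel_diff[OF T u(1,2)] by (simp add: scaleC_diff_right)
  moreover have "\<Gamma>0 (u1 - u2) = 0"
    using linear_on_Domain_diff[OF T G0] u by (metis Domain.DomainI diff_self)
  ultimately have "u1 - u2 = 0" using nps by (auto simp: point_spectrum_iff A0_iff)
  then show "u1 = u2" by simp
qed

section \<open>Krein's resolvent formula\<close>

locale green_pair =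
  fixes T Tt :: "('h::chilbert_space \<times> 'h) set"
    and \<Gamma>0 \<Gamma>1 \<Gamma>t0 \<Gamma>t1 :: "'h \<Rightarrow> 'g::chilbert_space"
  assumes linop_T: "linop T" and linrel_Tt: "linrel Tt"
    and linear_\<Gamma>0: "linear_on (Domain T) \<Gamma>0" and linear_\<Gamma>1: "linear_on (Domain T) \<Gamma>1"
    and linear_\<Gamma>t0: "linear_on (Domain Tt) \<Gamma>t0"
    and green: "\<And>f k g l. (f, k) \<in> T \<Longrightarrow> (g, l) \<in> Tt \<Longrightarrow>
      cinner k g - cinner f l = cinner (\<Gamma>1 f) (\<Gamma>t0 g) - cinner (\<Gamma>0 f) (\<Gamma>t1 g)"
    and dense_\<Gamma>t0: "closure (\<Gamma>t0 ` Domain Tt) = UNIV"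
    and adj_A0: "adj (A0 T \<Gamma>0) = A0 Tt \<Gamma>t0"
begin

lemma linrel_T: "linrel T"
  using linop_T by (rule linop_linrel)

lemma adj_gamma_field_resolvent:
  assumes "(k, f) \<in> shift (A0 T \<Gamma>0) z"
  shows "(f, \<Gamma>1 k) \<in> adj (gamma_field Tt \<Gamma>t0 (cnj z))"
  unfolding adj_iff
proof (intro allI impI)
  fix p v assume "(p, v) \<in> gamma_field Tt \<Gamma>t0 (cnj z)"
  then have v: "(v, cnj z *\<^sub>C v) \<in> Tt" and p: "p = \<Gamma>t0 v"
    by (simp_all add: gamma_field_iff kerT_iff)
  have k: "(k, f + z *\<^sub>C k) \<in> T" "\<Gamma>0 k = 0" using assms by (simp_all add: shift_iff A0_iff)
  have "cinner (f + z *\<^sub>C k) v - cinner k (cnj z *\<^sub>C v) = cinner (\<Gamma>1 k) (\<Gamma>t0 v)"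
    using green[OF k(1) v] k(2) by simp
  then have "cinner f v = cinner (\<Gamma>1 k) p"
    by (simp add: p cinner_add_left cinner_scaleC_left cinner_scaleC_right)
  then show "cinner v f = cinner p (\<Gamma>1 k)" by (metis cinner_cnj)
qed

lemma single_valued_adj_gamma_field:
  assumes "z \<in> resolvent_set (A0 T \<Gamma>0)"
  shows "single_valued (adj (gamma_field Tt \<Gamma>t0 (cnj z)))"
proof -
  have "Range (shift (A0 Tt \<Gamma>t0) (cnj z)) = UNIV"
    using Range_shift_adj_resolvent[OF assms] by (simp add: adj_A0)
  then show ?thesis
    by (intro single_valued_adj densely_defined_gamma_field linrel_Tt linear_\<Gamma>t0 dense_\<Gamma>t0)
qed

lemma krein_solution:
  assumes z: "z \<in> resolvent_set (A0 T \<Gamma>0)" and B1: "linrel B1" and B2: "linrel B2"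
    and f: "f \<in> Domain (adj (gamma_field Tt \<Gamma>t0 (cnj z)) O B2
                  O converse (id_minus (B1 O weyl T \<Gamma>0 \<Gamma>1 z O B2)))"
  obtains k u where "(f, k) \<in> converse (shift (A0 T \<Gamma>0) z)"
    and "(f, u) \<in> adj (gamma_field Tt \<Gamma>t0 (cnj z)) O B2
                  O converse (id_minus (B1 O weyl T \<Gamma>0 \<Gamma>1 z O B2)) O B1 O gamma_field T \<Gamma>0 z"
    and "(k + u, f) \<in> shift (ext_op T \<Gamma>0 \<Gamma>1 B1 B2) z"
proof -
  obtain y b h where y: "(f, y) \<in> adj (gamma_field Tt \<Gamma>t0 (cnj z))" and b: "(y, b) \<in> B2"
    and h: "(h, b) \<in> id_minus (B1 O weyl T \<Gamma>0 \<Gamma>1 z O B2)"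
    using f by blast
  then obtain u c where u: "(h, \<Gamma>0 u) \<in> B1" "u \<in> kerT T z" "(\<Gamma>1 u, c) \<in> B2" and c: "b = h - c"
    by (auto simp: id_minus_iff weyl_iff)
  obtain k where k: "(k, f) \<in> shift (A0 T \<Gamma>0) z"
    using z unfolding resolvent_set_def by blast
  \<comment> \<open>y is \<gamma>~(conj z)^* f, which Green's identity identifies with \<Gamma>1 (A0 - z)^-1 f.\<close>
  have "y = \<Gamma>1 k"
    using single_valuedD[OF single_valued_adj_gamma_field[OF z] y adj_gamma_field_resolvent[OF k]] .
  have kT: "(k, f + z *\<^sub>C k) \<in> T" "\<Gamma>0 k = 0" using k by (simp_all add: shift_iff A0_iff)
  have uT: "(u, z *\<^sub>C u) \<in> T" using u(2) by (simp add: kerT_iff)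
  have "(k + u, f + z *\<^sub>C (k + u)) \<in> T"
    using linrel_add[OF linrel_T kT(1) uT] by (simp add: scaleC_add_right add.assoc)
  moreover have D: "k \<in> Domain T" "u \<in> Domain T" using kT uT by blast+
  then have "\<Gamma>0 (k + u) = \<Gamma>0 u" "\<Gamma>1 (k + u) = y + \<Gamma>1 u"
    using linear_on_add[OF linear_\<Gamma>0 D] linear_on_add[OF linear_\<Gamma>1 D] kT(2) \<open>y = \<Gamma>1 k\<close>
    by simp_all
  moreover have "(y + \<Gamma>1 u, h) \<in> B2" using linrel_add[OF B2 b u(3)] c by simp
  ultimately have "(k + u, f + z *\<^sub>C (k + u)) \<in> ext_op T \<Gamma>0 \<Gamma>1 B1 B2"
    using u(1) unfolding ext_op_iff by (intro conjI exI[of _ h]) simp_all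
  moreover have "(\<Gamma>0 u, u) \<in> gamma_field T \<Gamma>0 z" using u(2) by (simp add: gamma_field_iff)
  then have "(f, u) \<in> adj (gamma_field Tt \<Gamma>t0 (cnj z)) O B2
                  O converse (id_minus (B1 O weyl T \<Gamma>0 \<Gamma>1 z O B2)) O B1 O gamma_field T \<Gamma>0 z"
    using y b h u(1) by blast
  ultimately show ?thesis using k by (intro that) (simp_all add: shift_iff)
qed

lemma single_valued_krein_term:
  assumes z: "z \<in> resolvent_set (A0 T \<Gamma>0)" and B1: "linop B1" and B2: "linop B2"
    and nps: "z \<notin> point_spectrum (ext_op T \<Gamma>0 \<Gamma>1 B1 B2)"
  shows "single_valued (opsum (converse (shift (A0 T \<Gamma>0) z))
           (adj (gamma_field Tt \<Gamma>t0 (cnj z)) O B2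
             O converse (id_minus (B1 O weyl T \<Gamma>0 \<Gamma>1 z O B2)) O B1 O gamma_field T \<Gamma>0 z))"
proof (rule single_valued_opsum)
  show "single_valued (converse (shift (A0 T \<Gamma>0) z))"
    using z unfolding resolvent_set_def by (simp add: linop_single_valued)
  have "linrel (B1 O weyl T \<Gamma>0 \<Gamma>1 z O B2)"
    using B1 B2 by (intro linrel_relcomp linop_linrel linrel_weyl[OF linrel_T linear_\<Gamma>0 linear_\<Gamma>1])
  then have "single_valued (converse (id_minus (B1 O weyl T \<Gamma>0 \<Gamma>1 z O B2)))"
    using weyl_fixed_point_eq_zero[OF linrel_T linear_\<Gamma>1 B2 nps]
    by (rule single_valued_converse_id_minus)
  then show "single_valued (adj (gamma_field Tt \<Gamma>t0 (cnj z)) O B2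
             O converse (id_minus (B1 O weyl T \<Gamma>0 \<Gamma>1 z O B2)) O B1 O gamma_field T \<Gamma>0 z)"
    by (intro single_valued_relcomp single_valued_adj_gamma_field[OF z]
        linop_single_valued[OF B1] linop_single_valued[OF B2]
        single_valued_gamma_field[OF linrel_T linear_\<Gamma>0 resolvent_set_not_point_spectrum[OF z]])
qed

lemma krein_formula:
  assumes z: "z \<in> resolvent_set (A0 T \<Gamma>0)" and B1: "linop B1" and B2: "linop B2"
  shows
   "z \<notin> point_spectrum (ext_op T \<Gamma>0 \<Gamma>1 B1 B2) \<longrightarrow>
      (\<forall>f. f \<in> Domain (adj (gamma_field Tt \<Gamma>t0 (cnj z)) O B2) \<and>
           f \<in> Domain (adj (gamma_field Tt \<Gamma>t0 (cnj z)) O B2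
                   O converse (id_minus (B1 O weyl T \<Gamma>0 \<Gamma>1 z O B2))) \<longrightarrow>
         f \<in> Range (shift (ext_op T \<Gamma>0 \<Gamma>1 B1 B2) z) \<and>
         opapp (converse (shift (ext_op T \<Gamma>0 \<Gamma>1 B1 B2) z)) f =
         opapp (opsum (converse (shift (A0 T \<Gamma>0) z))
                      (adj (gamma_field Tt \<Gamma>t0 (cnj z)) O B2
                        O converse (id_minus (B1 O weyl T \<Gamma>0 \<Gamma>1 z O B2))
                        O B1 O gamma_field T \<Gamma>0 z)) f) \<and>
      ((\<forall>f. f \<in> Domain (adj (gamma_field Tt \<Gamma>t0 (cnj z)) O B2) \<and>
           f \<in> Domain (adj (gamma_field Tt \<Gamma>t0 (cnj z)) O B2
                   O converse (id_minus (B1 O weyl T \<Gamma>0 \<Gamma>1 z O B2)))) \<longrightarrow>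
         bij_betw (opapp (shift (ext_op T \<Gamma>0 \<Gamma>1 B1 B2) z))
                  (Domain (ext_op T \<Gamma>0 \<Gamma>1 B1 B2)) UNIV)"
    (is "_ \<longrightarrow> (\<forall>f. ?dom f \<longrightarrow> ?resolvent f) \<and> ((\<forall>f. ?dom f) \<longrightarrow> ?bij)")
proof
  define E where "E = ext_op T \<Gamma>0 \<Gamma>1 B1 B2"
  define R where "R = converse (shift (A0 T \<Gamma>0) z)"
  define Q where "Q = adj (gamma_field Tt \<Gamma>t0 (cnj z)) O B2
      O converse (id_minus (B1 O weyl T \<Gamma>0 \<Gamma>1 z O B2)) O B1 O gamma_field T \<Gamma>0 z"
  assume nps: "z \<notin> point_spectrum (ext_op T \<Gamma>0 \<Gamma>1 B1 B2)"
  have B1L: "linrel B1" and B2L: "linrel B2" using B1 B2 by (simp_all add: linop_linrel)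
  have "linrel E"
    unfolding E_def by (rule linrel_ext_op[OF linrel_T linear_\<Gamma>0 linear_\<Gamma>1 B1L B2L])
  then have sv_E: "single_valued (converse (shift E z))"
    using nps unfolding E_def by (rule single_valued_converse_shift)
  have sv_RQ: "single_valued (opsum R Q)"
    unfolding R_def Q_def by (rule single_valued_krein_term[OF z B1 B2 nps])
  have solve: "\<exists>x. (f, x) \<in> converse (shift E z) \<and> (f, x) \<in> opsum R Q" if dom: "?dom f" for f
  proof -
    obtain k u where "(f, k) \<in> R" "(f, u) \<in> Q" "(k + u, f) \<in> shift E z"
      using krein_solution[OF z B1L B2L conjunct2[OF dom]] unfolding E_def R_def Q_def .
    then show ?thesis unfolding opsum_iff by blast
  qed
  have resolvent: "f \<in> Range (shift E z) \<and> opapp (converse (shift E z)) f = opapp (opsum R Q) f"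
    if dom: "?dom f" for f
  proof -
    obtain x where "(f, x) \<in> converse (shift E z)" "(f, x) \<in> opsum R Q" using solve[OF dom] by blast
    then show ?thesis
      using opapp_single_valued[OF sv_E] opapp_single_valued[OF sv_RQ] by blast
  qed
  have bij: "bij_betw (opapp (shift E z)) (Domain E) UNIV" if all: "\<forall>f. ?dom f"
  proof -
    have "E \<subseteq> T" by (auto simp: E_def ext_op_def)
    then have "single_valued (shift E z)"
      using single_valued_subset linop_single_valued[OF linop_T] single_valued_shift by blast
    moreover have "Range (shift E z) = UNIV" using solve all by blast
    ultimately show ?thesis
      using bij_betw_opapp[OF _ sv_E] by (simp add: Domain_shift)
  qed
  show "(\<forall>f. ?dom f \<longrightarrow> ?resolvent f) \<and> ((\<forall>f. ?dom f) \<longrightarrow> ?bij)"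
    unfolding E_def[symmetric] Q_def[symmetric] R_def[symmetric]
    using resolvent bij by blast
qed

end

lemma triple_GDM_green_pair:
  assumes "triple_GDM S St T Tt \<Gamma>0 \<Gamma>1 \<Gamma>t0 \<Gamma>t1"
  shows "green_pair T Tt \<Gamma>0 \<Gamma>1 \<Gamma>t0 \<Gamma>t1" and "green_pair Tt T \<Gamma>t0 \<Gamma>t1 \<Gamma>0 \<Gamma>1"
proof -
  have T: "linop T" "linop Tt"
    and green: "\<And>f k g l. (f, k) \<in> T \<Longrightarrow> (g, l) \<in> Tt \<Longrightarrow>
      cinner k g - cinner f l = cinner (\<Gamma>1 f) (\<Gamma>t0 g) - cinner (\<Gamma>0 f) (\<Gamma>t1 g)"
    using assms unfolding triple_GDM_def is_core_of_adj_def by blast+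
  show "green_pair T Tt \<Gamma>0 \<Gamma>1 \<Gamma>t0 \<Gamma>t1"
    using assms T unfolding triple_GDM_def green_pair_def by (simp add: linop_linrel)
  \<comment> \<open>Green's identity for the exchanged roles is the negated complex conjugate of (G).\<close>
  have "cinner l f - cinner g k = cinner (\<Gamma>t1 g) (\<Gamma>0 f) - cinner (\<Gamma>t0 g) (\<Gamma>1 f)"
    if "(g, l) \<in> Tt" "(f, k) \<in> T" for f k g l
    using arg_cong[OF green[OF that(2,1)], of "\<lambda>w. - cnj w"] by (simp add: cinner_cnj)
  then show "green_pair Tt T \<Gamma>t0 \<Gamma>t1 \<Gamma>0 \<Gamma>1"
    using assms T unfolding triple_GDM_def green_pair_def by (simp add: linop_linrel)
qed

theorem theorem4p4:
  fixes S St T Tt :: "('h::chilbert_space \<times> 'h) set"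
    and \<Gamma>0 \<Gamma>1 \<Gamma>t0 \<Gamma>t1 :: "'h \<Rightarrow> 'g::chilbert_space"
    and B1 B2 Bt1 Bt2 :: "('g \<times> 'g) set"
    and z \<mu> :: complex
  assumes sep: "separable_space TYPE('h)"
    and triple: "triple_GDM S St T Tt \<Gamma>0 \<Gamma>1 \<Gamma>t0 \<Gamma>t1"
    and rho_ne: "resolvent_set (A0 T \<Gamma>0) \<noteq> {}"
    and B: "linop B1" "linop B2" "linop Bt1" "linop Bt2"
    and lam: "z \<in> resolvent_set (A0 T \<Gamma>0)"
    and mu: "\<mu> \<in> resolvent_set (A0 Tt \<Gamma>t0)"
  shows
   "(z \<notin> point_spectrum (ext_op T \<Gamma>0 \<Gamma>1 B1 B2) \<longrightarrow>
      (\<forall>f. f \<in> Domain (adj (gamma_field Tt \<Gamma>t0 (cnj z)) O B2) \<and>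
           f \<in> Domain (adj (gamma_field Tt \<Gamma>t0 (cnj z)) O B2
                   O converse (id_minus (B1 O weyl T \<Gamma>0 \<Gamma>1 z O B2))) \<longrightarrow>
         f \<in> Range (shift (ext_op T \<Gamma>0 \<Gamma>1 B1 B2) z) \<and>
         opapp (converse (shift (ext_op T \<Gamma>0 \<Gamma>1 B1 B2) z)) f =
         opapp (opsum (converse (shift (A0 T \<Gamma>0) z))
                      (adj (gamma_field Tt \<Gamma>t0 (cnj z)) O B2
                        O converse (id_minus (B1 O weyl T \<Gamma>0 \<Gamma>1 z O B2))
                        O B1 O gamma_field T \<Gamma>0 z)) f) \<and>
      ((\<forall>f. f \<in> Domain (adj (gamma_field Tt \<Gamma>t0 (cnj z)) O B2) \<and>
           f \<in> Domain (adj (gamma_field Tt \<Gamma>t0 (cnj z)) O B2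
                   O converse (id_minus (B1 O weyl T \<Gamma>0 \<Gamma>1 z O B2)))) \<longrightarrow>
         bij_betw (opapp (shift (ext_op T \<Gamma>0 \<Gamma>1 B1 B2) z))
                  (Domain (ext_op T \<Gamma>0 \<Gamma>1 B1 B2)) UNIV)) \<and>
    (\<mu> \<notin> point_spectrum (ext_op Tt \<Gamma>t0 \<Gamma>t1 Bt1 Bt2) \<longrightarrow>
      (\<forall>g. g \<in> Domain (adj (gamma_field T \<Gamma>0 (cnj \<mu>)) O Bt2) \<and>
           g \<in> Domain (adj (gamma_field T \<Gamma>0 (cnj \<mu>)) O Bt2
                   O converse (id_minus (Bt1 O weyl Tt \<Gamma>t0 \<Gamma>t1 \<mu> O Bt2))) \<longrightarrow>
         g \<in> Range (shift (ext_op Tt \<Gamma>t0 \<Gamma>t1 Bt1 Bt2) \<mu>) \<and>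
         opapp (converse (shift (ext_op Tt \<Gamma>t0 \<Gamma>t1 Bt1 Bt2) \<mu>)) g =
         opapp (opsum (converse (shift (A0 Tt \<Gamma>t0) \<mu>))
                      (adj (gamma_field T \<Gamma>0 (cnj \<mu>)) O Bt2
                        O converse (id_minus (Bt1 O weyl Tt \<Gamma>t0 \<Gamma>t1 \<mu> O Bt2))
                        O Bt1 O gamma_field Tt \<Gamma>t0 \<mu>)) g) \<and>
      ((\<forall>g. g \<in> Domain (adj (gamma_field T \<Gamma>0 (cnj \<mu>)) O Bt2) \<and>
           g \<in> Domain (adj (gamma_field T \<Gamma>0 (cnj \<mu>)) O Bt2
                   O converse (id_minus (Bt1 O weyl Tt \<Gamma>t0 \<Gamma>t1 \<mu> O Bt2)))) \<longrightarrow>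
         bij_betw (opapp (shift (ext_op Tt \<Gamma>t0 \<Gamma>t1 Bt1 Bt2) \<mu>))
                  (Domain (ext_op Tt \<Gamma>t0 \<Gamma>t1 Bt1 Bt2)) UNIV))"
  using green_pair.krein_formula[OF triple_GDM_green_pair(1)[OF triple] lam B(1,2)]
    green_pair.krein_formula[OF triple_GDM_green_pair(2)[OF triple] mu B(3,4)]
  by blast

end
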